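(* Let $G$ be a connected graph with $m$ edges whose normalized Laplacian spectrum is $\{[\alpha]^{m_1},[\beta]^{m_2},[0]^1\}$ with $2\geq\alpha>\beta>0$ (i.e. $G$ has exactly the three distinct normalized Laplacian eigenvalues $\alpha,\beta,0$, with $0$ simple). Then $\beta\leq 1$, and one of the following holds: (i) $\beta=1$, and every pair of non-adjacent vertices of $G$ have the same neighborhood; (ii) $\beta<1$, and for any two non-adjacent vertices $u,v$ of $G$, $$-\frac{2m(\alpha-1)(\beta-1)}{\alpha\beta}\geq d_u-d_v\geq \frac{2m(\alpha-1)(\beta-1)}{\alpha\beta}.$$
   Context: $d_u$ denotes the degree of vertex $u$. For a graph with adjacency matrix $A$ and diagonal degree matrix $D$ (no isolated vertices), the normalized Laplacian is $\mathcal{L}=I-D^{-1/2}AD^{-1/2}$; its eigenvalues (with multiplicities) form the normalized Laplacian spectrum, written $\{[\lambda_1]^{m_1},\ldots,[\lambda_t]^{m_t}\}$. *)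

theory Defs
  imports "Jordan_Normal_Form.Char_Poly"
begin

definition simple_graph :: "nat \<Rightarrow> (nat \<Rightarrow> nat \<Rightarrow> bool) \<Rightarrow> bool" where
  "simple_graph n E \<longleftrightarrow> (\<forall>u v. E u v \<longrightarrow> u < n \<and> v < n) \<and>
     (\<forall>u v. E u v \<longrightarrow> E v u) \<and> (\<forall>u. \<not> E u u)"

definition connected_graph :: "nat \<Rightarrow> (nat \<Rightarrow> nat \<Rightarrow> bool) \<Rightarrow> bool" where
  "connected_graph n E \<longleftrightarrow> n \<ge> 1 \<and>
     (\<forall>u<n. \<forall>v<n. (u, v) \<in> {(x, y). x < n \<and> y < n \<and> E x y}\<^sup>*)"

definition nbhd :: "nat \<Rightarrow> (nat \<Rightarrow> nat \<Rightarrow> bool) \<Rightarrow> nat \<Rightarrow> nat set" where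
  "nbhd n E u = {w. w < n \<and> E u w}"

definition degree :: "nat \<Rightarrow> (nat \<Rightarrow> nat \<Rightarrow> bool) \<Rightarrow> nat \<Rightarrow> nat" where
  "degree n E u = card (nbhd n E u)"

definition num_edges :: "nat \<Rightarrow> (nat \<Rightarrow> nat \<Rightarrow> bool) \<Rightarrow> nat" where
  "num_edges n E = card {(u, v). u < v \<and> v < n \<and> E u v}"

definition adj_matrix :: "nat \<Rightarrow> (nat \<Rightarrow> nat \<Rightarrow> bool) \<Rightarrow> real mat" where
  "adj_matrix n E = mat n n (\<lambda>(i, j). if E i j then 1 else 0)"

definition deg_inv_sqrt_matrix :: "nat \<Rightarrow> (nat \<Rightarrow> nat \<Rightarrow> bool) \<Rightarrow> real mat" where
  "deg_inv_sqrt_matrix n E =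
     mat n n (\<lambda>(i, j). if i = j then 1 / sqrt (real (degree n E i)) else 0)"

definition norm_laplacian :: "nat \<Rightarrow> (nat \<Rightarrow> nat \<Rightarrow> bool) \<Rightarrow> real mat" where
  "norm_laplacian n E =
     1\<^sub>m n - deg_inv_sqrt_matrix n E * adj_matrix n E * deg_inv_sqrt_matrix n E"

definition eig_mult :: "real mat \<Rightarrow> real \<Rightarrow> nat" where
  "eig_mult A x = order x (char_poly A)"

end

theory Submission
  imports Defs "Jordan_Normal_Form.Jordan_Normal_Form_Uniqueness" "Jordan_Normal_Form.Jordan_Normal_Form_Existence"
begin

text \<open>
  Let \<open>w\<close> be the vector of square roots of the degrees. Connectivity makes the kernel of
  \<open>L\<close> the span of \<open>w\<close>, and since \<open>L\<close> is symmetric with spectrum \<open>{\<alpha>, \<beta>, 0}\<close> it satisfies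
  \<open>L (L - \<alpha>) (L - \<beta>) = 0\<close>. Hence every column of the symmetric matrix
  \<open>M = (L - \<alpha>) (L - \<beta>)\<close> lies in the span of \<open>w\<close>, so \<open>M = \<kappa> w w\<^sup>T\<close>; applying \<open>M\<close> to \<open>w\<close>
  gives \<open>\<kappa> \<cdot> 2m = \<alpha> \<beta>\<close>. Reading off the entries of \<open>M\<close> in terms of
  \<open>T = A D\<^sup>-\<^sup>1 A\<close>: for non-adjacent \<open>u \<noteq> v\<close> one gets \<open>T\<^sub>u\<^sub>v = \<kappa> d\<^sub>u d\<^sub>v\<close> and
  \<open>T\<^sub>u\<^sub>u = d\<^sub>u (\<kappa> d\<^sub>u - (1 - \<alpha>)(1 - \<beta>))\<close>. Since \<open>T\<^sub>u\<^sub>v \<le> T\<^sub>u\<^sub>u\<close>, this yields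
  \<open>(1 - \<alpha>)(1 - \<beta>) \<le> \<kappa> (d\<^sub>u - d\<^sub>v)\<close> in both orders, i.e. the degree bounds. The graph is
  not complete (a complete graph has a single non-zero eigenvalue), so a non-adjacent pair
  exists and forces \<open>(1 - \<alpha>)(1 - \<beta>) \<le> 0\<close>, i.e. \<open>\<beta> \<le> 1\<close>. When \<open>\<beta> = 1\<close>, equality
  \<open>T\<^sub>u\<^sub>v = T\<^sub>u\<^sub>u\<close> says every neighbour of \<open>u\<close> is a neighbour of \<open>v\<close>.
\<close>

lemma sum_list_mono_eq_pointwise:
  fixes f g :: "'a \<Rightarrow> nat"
  assumes "\<forall>x\<in>set xs. g x \<le> f x" "sum_list (map f xs) = sum_list (map g xs)"
  shows "\<forall>x\<in>set xs. f x = g x"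
  using assms
proof (induct xs)
  case (Cons a xs)
  have "sum_list (map g xs) \<le> sum_list (map f xs)"
    using Cons.prems(1) by (intro sum_list_mono) auto
  with Cons.prems have "f a = g a" "sum_list (map f xs) = sum_list (map g xs)" by auto
  with Cons show ?case by auto
qed simp

lemma index_mult_mat_sum:
  fixes A B :: "'a :: comm_ring_1 mat"
  assumes "A \<in> carrier_mat n n" "B \<in> carrier_mat n n" "i < n" "j < n"
  shows "(A * B) $$ (i,j) = (\<Sum>k<n. A $$ (i,k) * B $$ (k,j))"
  using assms by (simp add: scalar_prod_def row_def col_def lessThan_atLeast0)

lemma index_mult_mat_vec_sum:
  fixes A :: "'a :: comm_ring_1 mat"
  assumes "A \<in> carrier_mat n n" "v \<in> carrier_vec n" "i < n"
  shows "(A *\<^sub>v v) $ i = (\<Sum>k<n. A $$ (i,k) * v $ k)"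
  using assms by (simp add: scalar_prod_def row_def lessThan_atLeast0)

lemma diag_mult_mat_index:
  fixes f :: "nat \<Rightarrow> 'a :: comm_ring_1"
  assumes M: "M \<in> carrier_mat n m" and i: "i < n" and j: "j < m"
  shows "(mat n n (\<lambda>(i,j). if i = j then f i else 0) * M) $$ (i,j) = f i * M $$ (i,j)"
proof -
  have "(mat n n (\<lambda>(i,j). if i = j then f i else 0) * M) $$ (i,j)
      = (\<Sum>k\<in>{0..<n}. (if i = k then f i else 0) * M $$ (k,j))"
    using M i j by (simp add: scalar_prod_def row_def col_def)
  also have "\<dots> = (\<Sum>k\<in>{0..<n}. if k = i then f i * M $$ (i,j) else 0)"
    by (rule sum.cong) auto
  finally show ?thesis using i by simp
qed

lemma mult_diag_mat_index:
  fixes f :: "nat \<Rightarrow> 'a :: comm_ring_1"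
  assumes M: "M \<in> carrier_mat n m" and i: "i < n" and j: "j < m"
  shows "(M * mat m m (\<lambda>(i,j). if i = j then f i else 0)) $$ (i,j) = M $$ (i,j) * f j"
proof -
  have "(M * mat m m (\<lambda>(i,j). if i = j then f i else 0)) $$ (i,j)
      = (\<Sum>k\<in>{0..<m}. M $$ (i,k) * (if k = j then f k else 0))"
    using M i j by (simp add: scalar_prod_def row_def col_def)
  also have "\<dots> = (\<Sum>k\<in>{0..<m}. if k = j then M $$ (i,j) * f j else 0)"
    by (rule sum.cong) auto
  finally show ?thesis using j by simp
qed

lemma diag_mat_mult:
  fixes f g :: "nat \<Rightarrow> 'a :: comm_ring_1"
  shows "mat m m (\<lambda>(i,j). if i = j then f i else 0) * mat m m (\<lambda>(i,j). if i = j then g i else 0)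
    = mat m m (\<lambda>(i,j). if i = j then f i * g i else 0)"
proof (rule eq_matI)
  fix i j assume "i < dim_row (mat m m (\<lambda>(i,j). if i = j then f i * g i else 0))"
    "j < dim_col (mat m m (\<lambda>(i,j). if i = j then f i * g i else 0))"
  then show "(mat m m (\<lambda>(i,j). if i = j then f i else 0) * mat m m (\<lambda>(i,j). if i = j then g i else 0)) $$ (i,j)
      = mat m m (\<lambda>(i,j). if i = j then f i * g i else 0) $$ (i,j)"
    by (subst diag_mult_mat_index[of _ m m]) auto
qed auto

lemma mult_conjugated3:
  fixes P Q X Y Z :: "'a :: comm_ring_1 mat"
  assumes P: "P \<in> carrier_mat n n" and Q: "Q \<in> carrier_mat n n" and X: "X \<in> carrier_mat n n"
    and Y: "Y \<in> carrier_mat n n" and Z: "Z \<in> carrier_mat n n" and QP: "Q * P = 1\<^sub>m n"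
  shows "P * X * Q * (P * Y * Q * (P * Z * Q)) = P * (X * (Y * Z)) * Q"
proof -
  have mult2: "P * U * Q * (P * V * Q) = P * (U * V) * Q"
    if U: "U \<in> carrier_mat n n" and V: "V \<in> carrier_mat n n" for U V
  proof -
    have "P * U * Q * (P * V * Q) = P * U * ((Q * P) * (V * Q))"
      using P Q U V by (simp add: assoc_mult_mat[of _ n n _ n _ n])
    also have "\<dots> = P * (U * V) * Q"
      using P Q U V QP by (simp add: assoc_mult_mat[of _ n n _ n _ n])
    finally show ?thesis .
  qed
  show ?thesis using mult2[OF Y Z] mult2[OF X, of "Y * Z"] Y Z by simp
qed

lemma char_matrix_mult_index:
  fixes A :: "'a :: field mat"
  assumes A: "A \<in> carrier_mat n n" and i: "i < n" and j: "j < n"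
  shows "(char_matrix A a * char_matrix A b) $$ (i,j)
    = (\<Sum>k<n. A $$ (i,k) * A $$ (k,j)) - (a + b) * A $$ (i,j) + (if i = j then a * b else 0)"
proof -
  have C: "char_matrix A e \<in> carrier_mat n n" for e using A by simp
  have "(char_matrix A a * char_matrix A b) $$ (i,j)
      = (\<Sum>k<n. char_matrix A a $$ (i,k) * char_matrix A b $$ (k,j))"
    by (rule index_mult_mat_sum[OF C C i j])
  also have "\<dots> = (\<Sum>k<n. (A $$ (i,k) - (if i = k then a else 0)) * (A $$ (k,j) - (if k = j then b else 0)))"
    using A i j by (auto simp: char_matrix_def intro!: sum.cong)
  also have "\<dots> = (\<Sum>k<n. A $$ (i,k) * A $$ (k,j) - (if k = j then b * A $$ (i,j) else 0)
      - (if k = i then a * A $$ (i,j) else 0) + (if k = i then (if i = j then a * b else 0) else 0))"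
    by (rule sum.cong) (auto simp: algebra_simps)
  also have "\<dots> = (\<Sum>k<n. A $$ (i,k) * A $$ (k,j)) - (a + b) * A $$ (i,j) + (if i = j then a * b else 0)"
    using i j by (simp add: sum.distrib sum_subtractf algebra_simps)
  finally show ?thesis .
qed

lemma jordan_matrix_size_one_blocks:
  assumes "\<forall>(k,e)\<in>set n_as. k = 1"
  shows "jordan_matrix n_as = mat (length n_as) (length n_as) (\<lambda>(i,j). if i = j then snd (n_as ! i) else 0)"
  using assms
proof (induct n_as)
  case Nil
  show ?case unfolding jordan_matrix_def by (rule eq_matI) auto
next
  case (Cons p rest)
  obtain e where p: "p = (1, e)" using Cons.prems by (cases p) auto
  have IH: "jordan_matrix rest = mat (length rest) (length rest) (\<lambda>(i,j). if i = j then snd (rest ! i) else 0)"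
    using Cons by auto
  have J: "jordan_matrix (p # rest)
      = four_block_mat (jordan_block 1 e) (0\<^sub>m 1 (length rest)) (0\<^sub>m (length rest) 1) (jordan_matrix rest)"
    unfolding p jordan_matrix_def by (simp add: Let_def jordan_matrix_def[symmetric] IH)
  show ?case unfolding J IH
    by (rule eq_matI) (auto simp: p jordan_block_def nth_Cons')
qed

section \<open>Real symmetric matrices\<close>

lemma sym_mat_mult_kernel:
  fixes A :: "real mat"
  assumes A: "A \<in> carrier_mat n n" and sym: "\<And>i j. i < n \<Longrightarrow> j < n \<Longrightarrow> A $$ (i,j) = A $$ (j,i)"
    and v: "v \<in> carrier_vec n" and Av: "A *\<^sub>v (A *\<^sub>v v) = 0\<^sub>v n"
  shows "A *\<^sub>v v = 0\<^sub>v n"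
proof -
  define y where "y = A *\<^sub>v v"
  have y: "y \<in> carrier_vec n" using A v by (auto simp: y_def)
  have Ay: "(\<Sum>i<n. A $$ (j,i) * y $ i) = 0" if "j < n" for j
    using Av that index_mult_mat_vec_sum[OF A y that] by (simp add: y_def)
  have "y \<bullet> y = (\<Sum>i<n. (\<Sum>j<n. A $$ (i,j) * v $ j) * y $ i)"
    using A v y by (auto simp: scalar_prod_def y_def row_def lessThan_atLeast0 intro!: sum.cong)
  also have "\<dots> = (\<Sum>i<n. \<Sum>j<n. A $$ (i,j) * v $ j * y $ i)"
    by (simp add: sum_distrib_right)
  also have "\<dots> = (\<Sum>j<n. \<Sum>i<n. A $$ (i,j) * v $ j * y $ i)"
    by (rule sum.swap)
  also have "\<dots> = (\<Sum>j<n. v $ j * (\<Sum>i<n. A $$ (j,i) * y $ i))"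
    by (auto simp: sum_distrib_left sym mult_ac intro!: sum.cong)
  also have "\<dots> = 0" by (simp add: Ay)
  finally have "y = 0\<^sub>v n" using conjugate_square_eq_0_vec[OF y] by simp
  then show ?thesis by (simp add: y_def)
qed

context
  fixes A :: "real mat" and n :: nat
  assumes A: "A \<in> carrier_mat n n" and sym: "\<And>i j. i < n \<Longrightarrow> j < n \<Longrightarrow> A $$ (i,j) = A $$ (j,i)"
begin

lemma sym_mat_complex_eigenvalue_real:
  assumes ev: "eigenvalue (map_mat complex_of_real A) a"
  shows "a = complex_of_real (Re a)"
proof -
  obtain v where v: "v \<in> carrier_vec n" "v \<noteq> 0\<^sub>v n" and Av: "map_mat complex_of_real A *\<^sub>v v = a \<cdot>\<^sub>v v"
    using ev A unfolding eigenvalue_def eigenvector_def by auto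
  have Avi: "(\<Sum>j<n. complex_of_real (A $$ (i,j)) * v $ j) = a * v $ i" if i: "i < n" for i
    using arg_cong[OF Av, of "\<lambda>w. w $ i"] index_mult_mat_vec_sum[of _ n v i] A v i by simp
  define q where "q = (\<Sum>i<n. cnj (v $ i) * (\<Sum>j<n. complex_of_real (A $$ (i,j)) * v $ j))"
  define r where "r = (\<Sum>i<n. complex_of_real ((cmod (v $ i))\<^sup>2))"
  have qr: "q = a * r"
    unfolding q_def r_def using Avi complex_norm_square
    by (simp add: sum_distrib_left mult_ac)
  \<comment> \<open>\<open>q = v\<^sup>* A v\<close> is real because \<open>A\<close> is real symmetric\<close>
  have "cnj q = (\<Sum>i<n. \<Sum>j<n. v $ i * complex_of_real (A $$ (i,j)) * cnj (v $ j))"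
    unfolding q_def by (simp add: sum_distrib_left mult_ac)
  also have "\<dots> = (\<Sum>j<n. \<Sum>i<n. v $ i * complex_of_real (A $$ (i,j)) * cnj (v $ j))"
    by (rule sum.swap)
  also have "\<dots> = q"
    unfolding q_def by (auto simp: sum_distrib_left sym mult_ac intro!: sum.cong)
  finally have cq: "cnj q = q" .
  obtain i where i: "i < n" "v $ i \<noteq> 0" using v by (auto simp: vec_eq_iff)
  have "(cmod (v $ i))\<^sup>2 \<le> (\<Sum>i<n. (cmod (v $ i))\<^sup>2)"
    using i by (intro member_le_sum) auto
  moreover have "(cmod (v $ i))\<^sup>2 > 0" using i by simp
  ultimately have "r \<noteq> 0" unfolding r_def of_real_sum[symmetric] by (metis of_real_eq_0_iff not_less)
  moreover have "cnj r = r" unfolding r_def by simp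
  ultimately have "cnj a = a" using cq qr by (metis complex_cnj_mult mult_right_cancel)
  then show ?thesis by (metis Reals_cnj_iff complex_is_Real_iff complex_eq_iff Re_complex_of_real Im_complex_of_real)
qed

interpretation of_real_poly: map_poly_comm_ring_hom "complex_of_real" ..

lemma sym_mat_char_poly_splits: "\<exists>es. char_poly A = (\<Prod>e\<leftarrow>es. [:-e,1:])"
proof -
  let ?Ac = "map_mat complex_of_real A"
  have Ac: "?Ac \<in> carrier_mat n n" using A by simp
  obtain as where cp: "char_poly ?Ac = (\<Prod>a\<leftarrow>as. [:-a,1:])" using char_poly_factorized[OF Ac] by blast
  have "a = complex_of_real (Re a)" if "a \<in> set as" for a
  proof -
    have "poly (char_poly ?Ac) a = 0" unfolding cp using that by (simp add: poly_prod_list_zero_iff)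
    then show ?thesis using eigenvalue_root_char_poly[OF Ac] sym_mat_complex_eigenvalue_real by blast
  qed
  then have as: "map (\<lambda>a. [:-a,1:]) as = map (\<lambda>e. [:-complex_of_real e,1:]) (map Re as)"
    by (auto intro!: map_cong)
  have hom: "map_poly complex_of_real (\<Prod>e\<leftarrow>es. [:-e,1:]) = (\<Prod>e\<leftarrow>es. [:-complex_of_real e,1:])" for es
  proof (induct es)
    case (Cons e es)
    have "map_poly complex_of_real [:-e,1:] = [:-complex_of_real e,1:]" by simp
    then show ?case using Cons by (simp only: list.map prod_list.Cons of_real_poly.hom_mult)
  qed simp
  have "map_poly complex_of_real (char_poly A) = char_poly ?Ac"
    by (rule of_real_hom.char_poly_hom[OF A, symmetric])
  also have "\<dots> = map_poly complex_of_real (\<Prod>e\<leftarrow>map Re as. [:-e,1:])"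
    unfolding cp hom by (simp only: as)
  finally have "char_poly A = (\<Prod>e\<leftarrow>map Re as. [:-e,1:])"
    by (simp add: poly_eq_iff coeff_map_poly)
  then show ?thesis by blast
qed

lemma sym_mat_gen_eigenspace_dim: "dim_gen_eigenspace A e 2 = dim_gen_eigenspace A e 1"
proof -
  let ?C = "char_matrix A e"
  have C: "?C \<in> carrier_mat n n" using A by simp
  have Csym: "\<And>i j. i < n \<Longrightarrow> j < n \<Longrightarrow> ?C $$ (i,j) = ?C $$ (j,i)"
    using A sym by (auto simp: char_matrix_def)
  have "v \<in> carrier_vec n \<and> ?C * ?C *\<^sub>v v = 0\<^sub>v n \<longleftrightarrow>
      v \<in> carrier_vec n \<and> ?C *\<^sub>v v = 0\<^sub>v n" for v
  proof (cases "v \<in> carrier_vec n")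
    case True
    then have "?C * ?C *\<^sub>v v = ?C *\<^sub>v (?C *\<^sub>v v)" by (rule assoc_mult_mat_vec[OF C C])
    then show ?thesis using sym_mat_mult_kernel[OF C Csym True] C True by auto
  qed simp
  then have "mat_kernel (?C ^\<^sub>m 2) = mat_kernel (?C ^\<^sub>m 1)"
    using C by (simp add: numeral_2_eq_2 mat_kernel_def)
  then show ?thesis unfolding dim_gen_eigenspace_def kernel_dim_def by simp
qed

lemma sym_mat_jordan_blocks_size_one:
  assumes jnf: "jordan_nf A n_as"
  shows "\<forall>(k,e)\<in>set n_as. k = 1"
proof clarify
  fix k e assume ke: "(k, e) \<in> set n_as"
  let ?ks = "map fst [(k,e')\<leftarrow>n_as. e' = e]"
  have "(\<Sum>k\<leftarrow>?ks. min 2 k) = (\<Sum>k\<leftarrow>?ks. min 1 k)"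
    using sym_mat_gen_eigenspace_dim dim_gen_eigenspace[OF jnf] by simp
  then have "\<forall>k\<in>set ?ks. min 2 k = min 1 k"
    by (intro sum_list_mono_eq_pointwise) auto
  moreover have "k \<in> set ?ks" using ke by force
  moreover have "k \<noteq> 0" using jnf ke unfolding jordan_nf_def by force
  ultimately show "k = 1" by fastforce
qed

lemma sym_mat_annihilated_by_eigenvalues:
  assumes evs: "\<And>e. eigenvalue A e \<Longrightarrow> e = a \<or> e = b \<or> e = c"
  shows "char_matrix A a * (char_matrix A b * char_matrix A c) = 0\<^sub>m n n"
proof -
  obtain es where "char_poly A = (\<Prod>e\<leftarrow>es. [:-e,1:])" using sym_mat_char_poly_splits by blast
  then obtain n_as where jnf: "jordan_nf A n_as" using jordan_nf_exists[OF A] by blast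
  then obtain P Q where wit: "similar_mat_wit A (jordan_matrix n_as) P Q"
    unfolding jordan_nf_def similar_mat_def by blast
  note W = similar_mat_witD2[OF A wit]
  note ones = sym_mat_jordan_blocks_size_one[OF jnf]
  define d where "d i = snd (n_as ! i)" for i
  have J: "jordan_matrix n_as = mat (length n_as) (length n_as) (\<lambda>(i,j). if i = j then d i else 0)"
    unfolding d_def by (rule jordan_matrix_size_one_blocks[OF ones])
  then have len: "length n_as = n" using W(5) by auto
  have d: "d i = a \<or> d i = b \<or> d i = c" if i: "i < n" for i
  proof -
    have "(fst (n_as ! i), d i) \<in> set n_as" using i len unfolding d_def by simp
    then have "poly (char_poly A) (d i) = 0"
      unfolding jordan_nf_char_poly[OF jnf] using ones by (force simp: poly_prod_list_zero_iff)
    then show ?thesis using eigenvalue_root_char_poly[OF A] evs by blast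
  qed
  have cJ: "char_matrix (jordan_matrix n_as) x = mat n n (\<lambda>(i,j). if i = j then d i - x else 0)" for x
    unfolding J len char_matrix_def by (rule eq_matI) auto
  have J0: "char_matrix (jordan_matrix n_as) a *
      (char_matrix (jordan_matrix n_as) b * char_matrix (jordan_matrix n_as) c) = 0\<^sub>m n n"
    unfolding cJ diag_mat_mult by (rule eq_matI) (use d in auto)
  have sim: "char_matrix A x = P * char_matrix (jordan_matrix n_as) x * Q" for x
    using similar_mat_witD(3)[OF refl similar_mat_wit_char_matrix[OF wit]] .
  have carr: "char_matrix (jordan_matrix n_as) x \<in> carrier_mat n n" for x using W(5) by simp
  have "char_matrix A a * (char_matrix A b * char_matrix A c)
      = P * (char_matrix (jordan_matrix n_as) a *
          (char_matrix (jordan_matrix n_as) b * char_matrix (jordan_matrix n_as) c)) * Q"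
    unfolding sim by (rule mult_conjugated3[OF W(6,7) carr carr carr W(2)])
  also have "\<dots> = 0\<^sub>m n n" unfolding J0 using W(6,7) by simp
  finally show ?thesis .
qed

end

section \<open>The normalized Laplacian of a simple graph\<close>

definition sqrt_degree :: "nat \<Rightarrow> (nat \<Rightarrow> nat \<Rightarrow> bool) \<Rightarrow> nat \<Rightarrow> real" where
  "sqrt_degree n E i = sqrt (real (degree n E i))"

text \<open>\<open>two_walk_weight n E\<close> is the matrix \<open>A D\<^sup>-\<^sup>1 A\<close>.\<close>

definition two_walk_weight :: "nat \<Rightarrow> (nat \<Rightarrow> nat \<Rightarrow> bool) \<Rightarrow> nat \<Rightarrow> nat \<Rightarrow> real" where
  "two_walk_weight n E i j = (\<Sum>k\<in>nbhd n E i. if E k j then 1 / real (degree n E k) else 0)"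

lemma sqrt_degree_square: "sqrt_degree n E i * sqrt_degree n E i = real (degree n E i)"
  unfolding sqrt_degree_def by simp

context
  fixes n :: nat and E :: "nat \<Rightarrow> nat \<Rightarrow> bool"
  assumes sg: "simple_graph n E"
begin

lemma edge_bound: "E u v \<Longrightarrow> u < n \<and> v < n" using sg by (auto simp: simple_graph_def)
lemma edge_sym: "E u v \<Longrightarrow> E v u" using sg by (auto simp: simple_graph_def)
lemma edge_irrefl: "\<not> E u u" using sg by (auto simp: simple_graph_def)

lemma finite_nbhd: "finite (nbhd n E i)" unfolding nbhd_def by auto

lemma sum_nbhd: "(\<Sum>k<n. if E i k then f k else 0) = (\<Sum>k\<in>nbhd n E i. f k)"
proof -
  have eq: "nbhd n E i = {k \<in> {..<n}. E i k}" unfolding nbhd_def by auto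
  show ?thesis unfolding eq by (rule sum.inter_filter[symmetric]) simp
qed

lemma degree_pos_of_neighbour: "k \<in> nbhd n E i \<Longrightarrow> degree n E k > 0"
proof -
  assume k: "k \<in> nbhd n E i"
  then have "E k i" "i < n" using edge_sym edge_bound by (auto simp: nbhd_def)
  then have "i \<in> nbhd n E k" by (simp add: nbhd_def)
  then show ?thesis unfolding degree_def using finite_nbhd[of k] card_gt_0_iff by blast
qed

lemma norm_laplacian_carrier: "norm_laplacian n E \<in> carrier_mat n n"
  unfolding norm_laplacian_def deg_inv_sqrt_matrix_def adj_matrix_def by auto

lemma norm_laplacian_index:
  assumes i: "i < n" and j: "j < n"
  shows "norm_laplacian n E $$ (i,j)
    = (if i = j then 1 else 0) - (if E i j then 1 / (sqrt_degree n E i * sqrt_degree n E j) else 0)"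
proof -
  let ?s = "sqrt_degree n E"
  define D where "D = deg_inv_sqrt_matrix n E"
  define A where "A = adj_matrix n E"
  have D: "D = mat n n (\<lambda>(i,j). if i = j then 1 / ?s i else 0)"
    unfolding D_def deg_inv_sqrt_matrix_def sqrt_degree_def ..
  have Ac: "A \<in> carrier_mat n n" unfolding A_def adj_matrix_def by simp
  have DA: "D * A \<in> carrier_mat n n" unfolding D using Ac by (intro mult_carrier_mat) auto
  have "(D * A * D) $$ (i,j) = (D * A) $$ (i,j) * (1 / ?s j)"
    using mult_diag_mat_index[OF DA i j, of "\<lambda>i. 1 / ?s i"] unfolding D by simp
  also have "(D * A) $$ (i,j) = 1 / ?s i * A $$ (i,j)"
    using diag_mult_mat_index[OF Ac i j, of "\<lambda>i. 1 / ?s i"] unfolding D by simp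
  finally have DAD: "(D * A * D) $$ (i,j) = (if E i j then 1 / (?s i * ?s j) else 0)"
    using i j by (simp add: A_def adj_matrix_def)
  moreover have "D * A * D \<in> carrier_mat n n" using DA Ac unfolding D by (intro mult_carrier_mat) auto
  ultimately have "(1\<^sub>m n - D * A * D) $$ (i,j) = (1\<^sub>m n) $$ (i,j) - (D * A * D) $$ (i,j)"
    using i j by (intro index_minus_mat) auto
  then show ?thesis using i j DAD edge_irrefl
    unfolding norm_laplacian_def D_def[symmetric] A_def[symmetric] by simp
qed

lemma norm_laplacian_sym: "i < n \<Longrightarrow> j < n \<Longrightarrow> norm_laplacian n E $$ (i,j) = norm_laplacian n E $$ (j,i)"
  by (auto simp: norm_laplacian_index edge_sym mult.commute)

lemma norm_laplacian_row_sum: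
  assumes i: "i < n"
  shows "(\<Sum>k<n. norm_laplacian n E $$ (i,k) * x k)
    = x i - (\<Sum>k\<in>nbhd n E i. x k / (sqrt_degree n E i * sqrt_degree n E k))"
proof -
  let ?s = "sqrt_degree n E"
  have "(\<Sum>k<n. norm_laplacian n E $$ (i,k) * x k)
      = (\<Sum>k<n. (if k = i then x i else 0) - (if E i k then x k / (?s i * ?s k) else 0))"
    by (rule sum.cong) (auto simp: norm_laplacian_index i edge_irrefl)
  also have "\<dots> = (\<Sum>k<n. if k = i then x i else 0) - (\<Sum>k<n. if E i k then x k / (?s i * ?s k) else 0)"
    by (simp add: sum_subtractf)
  also have "\<dots> = x i - (\<Sum>k\<in>nbhd n E i. x k / (?s i * ?s k))"
    using i sum_nbhd by simp
  finally show ?thesis .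
qed

lemma norm_laplacian_square_index:
  assumes i: "i < n" and j: "j < n"
  shows "(\<Sum>k<n. norm_laplacian n E $$ (i,k) * norm_laplacian n E $$ (k,j))
    = (if i = j then 1 else 0) - 2 * (if E i j then 1 / (sqrt_degree n E i * sqrt_degree n E j) else 0)
      + two_walk_weight n E i j / (sqrt_degree n E i * sqrt_degree n E j)"
proof -
  let ?L = "norm_laplacian n E" and ?s = "sqrt_degree n E"
  have "(\<Sum>k\<in>nbhd n E i. ?L $$ (k,j) / (?s i * ?s k))
     = (\<Sum>k\<in>nbhd n E i. (if k = j then 1 / (?s i * ?s j) else 0)
          - (if E k j then 1 / real (degree n E k) else 0) / (?s i * ?s j))"
  proof (rule sum.cong[OF refl])
    fix k assume k: "k \<in> nbhd n E i"
    have "?s k > 0" using degree_pos_of_neighbour[OF k] unfolding sqrt_degree_def by simp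
    then show "?L $$ (k,j) / (?s i * ?s k) = (if k = j then 1 / (?s i * ?s j) else 0)
          - (if E k j then 1 / real (degree n E k) else 0) / (?s i * ?s j)"
      using k j sqrt_degree_square[of n E k, symmetric]
      by (auto simp: nbhd_def norm_laplacian_index field_simps edge_irrefl)
  qed
  also have "\<dots> = (\<Sum>k\<in>nbhd n E i. if k = j then 1 / (?s i * ?s j) else 0)
      - two_walk_weight n E i j / (?s i * ?s j)"
    unfolding two_walk_weight_def by (simp add: sum_subtractf sum_divide_distrib)
  also have "(\<Sum>k\<in>nbhd n E i. if k = j then 1 / (?s i * ?s j) else 0)
      = (if E i j then 1 / (?s i * ?s j) else 0)"
    using finite_nbhd[of i] j by (simp add: nbhd_def)
  finally show ?thesis
    using norm_laplacian_row_sum[OF i, of "\<lambda>k. ?L $$ (k,j)"] norm_laplacian_index[OF i j] by simp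
qed

lemma handshake_nat: "(\<Sum>i<n. degree n E i) = 2 * num_edges n E"
proof -
  define P where "P = {(i,j). i < n \<and> j < n \<and> E i j}"
  define P1 where "P1 = {(u,v). u < v \<and> v < n \<and> E u v}"
  define P2 where "P2 = {(u,v). v < u \<and> u < n \<and> E u v}"
  have fP: "finite P" unfolding P_def by (rule finite_subset[of _ "{..<n} \<times> {..<n}"]) auto
  have "P = Sigma {..<n} (nbhd n E)" unfolding P_def nbhd_def by auto
  then have cP: "card P = (\<Sum>i<n. degree n E i)" unfolding degree_def
    by (simp add: finite_nbhd)
  have PU: "P = P1 \<union> P2" unfolding P_def P1_def P2_def by (auto, metis edge_irrefl nat_neq_iff)
  have dis: "P1 \<inter> P2 = {}" unfolding P1_def P2_def by auto
  have f1: "finite P1" "finite P2" using fP PU by auto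
  have P2i: "P2 = prod.swap ` P1" unfolding P1_def P2_def using edge_sym by (auto simp: image_iff)
  have "card P2 = card P1" unfolding P2i by (rule card_image) simp
  moreover have "card P = card P1 + card P2" unfolding PU by (rule card_Un_disjoint[OF f1 dis])
  ultimately have "card P = 2 * card P1" by simp
  moreover have "num_edges n E = card P1" unfolding num_edges_def P1_def ..
  ultimately show ?thesis using cP by simp
qed

lemma handshake: "(\<Sum>i<n. real (degree n E i)) = 2 * real (num_edges n E)"
  using arg_cong[OF handshake_nat, of real] by simp

lemma two_walk_weight_le_self: "two_walk_weight n E u v \<le> two_walk_weight n E u u"
  unfolding two_walk_weight_def by (rule sum_mono) (auto simp: nbhd_def dest: edge_sym)

lemma nbhd_subset_of_two_walk_weight_eq:
  assumes "two_walk_weight n E u v = two_walk_weight n E u u"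
  shows "nbhd n E u \<subseteq> nbhd n E v"
proof
  fix k assume k: "k \<in> nbhd n E u"
  let ?f = "\<lambda>j. (if E j u then 1 / real (degree n E j) else 0) - (if E j v then 1 / real (degree n E j) else 0)"
  have "(\<Sum>j\<in>nbhd n E u. ?f j) = 0"
    using assms unfolding two_walk_weight_def by (simp add: sum_subtractf)
  moreover have "0 \<le> ?f j" if "j \<in> nbhd n E u" for j
    using that edge_sym[of u j] by (auto simp: nbhd_def)
  ultimately have "?f k = 0" using sum_nonneg_eq_0_iff[of "nbhd n E u" ?f] finite_nbhd k by blast
  moreover have "E k u" using k by (auto simp: nbhd_def intro: edge_sym)
  moreover have "degree n E k > 0" using degree_pos_of_neighbour[OF k] .
  ultimately have "E k v" by (auto split: if_splits)
  then show "k \<in> nbhd n E v" using edge_sym[of k v] edge_bound[of k v] by (auto simp: nbhd_def)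
qed

lemma two_le_card_of_singular_norm_laplacian:
  assumes con: "connected_graph n E" and ev: "eigenvalue (norm_laplacian n E) 0"
  shows "n \<ge> 2"
proof (rule ccontr)
  assume "\<not> n \<ge> 2"
  then have n: "n = 1" using con unfolding connected_graph_def by simp
  obtain v where v: "v \<in> carrier_vec n" "v \<noteq> 0\<^sub>v n" and Lv: "norm_laplacian n E *\<^sub>v v = 0 \<cdot>\<^sub>v v"
    using ev norm_laplacian_carrier unfolding eigenvalue_def eigenvector_def by auto
  have "(norm_laplacian n E *\<^sub>v v) $ 0 = v $ 0"
    using index_mult_mat_vec_sum[OF norm_laplacian_carrier v(1)] norm_laplacian_index edge_irrefl n by simp
  then have "v $ 0 = 0" using Lv v n by simp
  then show False using v n by (auto simp: vec_eq_iff)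
qed

end

section \<open>Connected graphs\<close>

context
  fixes n :: nat and E :: "nat \<Rightarrow> nat \<Rightarrow> bool"
  assumes sg: "simple_graph n E" and con: "connected_graph n E" and n2: "n \<ge> 2"
begin

lemma degree_pos:
  assumes i: "i < n"
  shows "degree n E i > 0"
proof -
  define j where "j = (if i = 0 then 1 else 0::nat)"
  have j: "j < n" "j \<noteq> i" using n2 i unfolding j_def by auto
  have "(i, j) \<in> {(x, y). x < n \<and> y < n \<and> E x y}\<^sup>*" using con i j unfolding connected_graph_def by blast
  then have "\<exists>w. (i, w) \<in> {(x, y). x < n \<and> y < n \<and> E x y}"
    using j(2) by (metis converse_rtranclE)
  then obtain w where "(i, w) \<in> {(x, y). x < n \<and> y < n \<and> E x y}" by blast
  then have "w \<in> nbhd n E i" by (auto simp: nbhd_def)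
  then show ?thesis unfolding degree_def using finite_nbhd[OF sg, of i] card_gt_0_iff by blast
qed

lemma sqrt_degree_pos: "i < n \<Longrightarrow> sqrt_degree n E i > 0"
  by (simp add: sqrt_degree_def degree_pos)

lemma norm_laplacian_sqrt_degree:
  assumes i: "i < n"
  shows "(\<Sum>k<n. norm_laplacian n E $$ (i,k) * sqrt_degree n E k) = 0"
proof -
  have "(\<Sum>k\<in>nbhd n E i. sqrt_degree n E k / (sqrt_degree n E i * sqrt_degree n E k))
      = (\<Sum>k\<in>nbhd n E i. 1 / sqrt_degree n E i)"
  proof (rule sum.cong[OF refl])
    fix k assume "k \<in> nbhd n E i"
    then have "sqrt_degree n E k > 0" using sqrt_degree_pos by (simp add: nbhd_def)
    then show "sqrt_degree n E k / (sqrt_degree n E i * sqrt_degree n E k) = 1 / sqrt_degree n E i"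
      by simp
  qed
  also have "\<dots> = real (degree n E i) / sqrt_degree n E i" by (simp add: degree_def)
  also have "\<dots> = sqrt_degree n E i"
    using sqrt_degree_square[of n E i] sqrt_degree_pos[OF i] by (simp add: field_simps)
  finally show ?thesis using norm_laplacian_row_sum[OF sg i, of "sqrt_degree n E"] by simp
qed

lemma harmonic_constant:
  assumes harm: "\<And>i. i < n \<Longrightarrow> real (degree n E i) * y i = (\<Sum>k\<in>nbhd n E i. y k)"
    and i: "i < n"
  shows "y i = Max (y ` {..<n})"
proof -
  define mx where "mx = Max (y ` {..<n})"
  have "y 0 \<in> y ` {..<n}" using n2 by simp
  then have fin: "finite (y ` {..<n})" "y ` {..<n} \<noteq> {}" by auto
  have le: "y j \<le> mx" if "j < n" for j unfolding mx_def using fin that by (intro Max_ge) auto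
  obtain u where u: "u < n" "y u = mx" using Max_in[OF fin] unfolding mx_def by auto
  \<comment> \<open>maximum principle: \<open>y\<close> is the average of its neighbours, so a maximum spreads along edges\<close>
  have max_step: "y k = mx" if a: "a < n" "y a = mx" "E a k" for a k
  proof -
    have "(\<Sum>j\<in>nbhd n E a. mx - y j) = real (degree n E a) * mx - (\<Sum>j\<in>nbhd n E a. y j)"
      by (simp add: sum_subtractf degree_def)
    also have "\<dots> = 0" using harm[OF a(1)] a(2) by simp
    finally have "(\<Sum>j\<in>nbhd n E a. mx - y j) = 0" .
    moreover have "\<forall>j\<in>nbhd n E a. 0 \<le> mx - y j" using le by (auto simp: nbhd_def)
    moreover have "k \<in> nbhd n E a" using a(3) edge_bound[OF sg] by (auto simp: nbhd_def)
    ultimately have "mx - y k = 0"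
      using sum_nonneg_eq_0_iff[of "nbhd n E a" "\<lambda>j. mx - y j"] finite_nbhd[OF sg] by blast
    then show ?thesis by simp
  qed
  have "(u, i) \<in> {(x, y). x < n \<and> y < n \<and> E x y}\<^sup>*" using con u i unfolding connected_graph_def by blast
  then have "y i = mx" by (induct rule: rtrancl_induct) (use u max_step in auto)
  then show ?thesis unfolding mx_def .
qed

lemma norm_laplacian_kernel:
  assumes x: "\<forall>i<n. (\<Sum>k<n. norm_laplacian n E $$ (i,k) * x k) = 0"
  shows "\<exists>c. \<forall>i<n. x i = c * sqrt_degree n E i"
proof -
  define y where "y i = x i / sqrt_degree n E i" for i
  have "real (degree n E i) * y i = (\<Sum>k\<in>nbhd n E i. y k)" if i: "i < n" for i
  proof -
    have "x i = (\<Sum>k\<in>nbhd n E i. x k / (sqrt_degree n E i * sqrt_degree n E k))"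
      using x norm_laplacian_row_sum[OF sg i, of x] i by simp
    also have "\<dots> = (\<Sum>k\<in>nbhd n E i. y k) / sqrt_degree n E i"
      unfolding y_def sum_divide_distrib by (rule sum.cong[OF refl]) (simp add: mult.commute)
    finally have xi: "x i = (\<Sum>k\<in>nbhd n E i. y k) / sqrt_degree n E i" .
    show ?thesis
      using sqrt_degree_pos[OF i] sqrt_degree_square[of n E i] degree_pos[OF i] unfolding y_def xi
      by (simp add: field_simps)
  qed
  then have "y i = Max (y ` {..<n})" if "i < n" for i using harmonic_constant that by blast
  moreover define c where "c = Max (y ` {..<n})"
  ultimately have "x i = c * sqrt_degree n E i" if "i < n" for i
    using sqrt_degree_pos[OF that] that unfolding y_def c_def[symmetric] by (simp add: divide_eq_eq)
  then show ?thesis by blast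
qed

lemma eigenvector_orthogonal_sqrt_degree:
  assumes x: "x \<in> carrier_vec n" and Lx: "norm_laplacian n E *\<^sub>v x = \<mu> \<cdot>\<^sub>v x" and "\<mu> \<noteq> 0"
  shows "(\<Sum>i<n. sqrt_degree n E i * x $ i) = 0"
proof -
  let ?L = "norm_laplacian n E" and ?s = "sqrt_degree n E"
  have Lxi: "(\<Sum>k<n. ?L $$ (i,k) * x $ k) = \<mu> * x $ i" if i: "i < n" for i
    using arg_cong[OF Lx, of "\<lambda>v. v $ i"] index_mult_mat_vec_sum[OF norm_laplacian_carrier[OF sg] x i] x i
    by simp
  have "(\<Sum>i<n. ?s i * (\<Sum>k<n. ?L $$ (i,k) * x $ k)) = (\<Sum>i<n. ?s i * (\<mu> * x $ i))"
    by (rule sum.cong[OF refl]) (simp add: Lxi)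
  then have "\<mu> * (\<Sum>i<n. ?s i * x $ i) = (\<Sum>i<n. ?s i * (\<Sum>k<n. ?L $$ (i,k) * x $ k))"
    by (simp add: sum_distrib_left mult_ac)
  also have "\<dots> = (\<Sum>i<n. \<Sum>k<n. ?s i * ?L $$ (i,k) * x $ k)"
    by (simp add: sum_distrib_left mult_ac)
  also have "\<dots> = (\<Sum>k<n. \<Sum>i<n. ?s i * ?L $$ (i,k) * x $ k)" by (rule sum.swap)
  also have "\<dots> = (\<Sum>k<n. x $ k * (\<Sum>i<n. ?L $$ (k,i) * ?s i))"
    by (auto simp: sum_distrib_left norm_laplacian_sym[OF sg] mult_ac intro!: sum.cong)
  also have "\<dots> = 0" by (simp add: norm_laplacian_sqrt_degree)
  finally show ?thesis using \<open>\<mu> \<noteq> 0\<close> by simp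
qed

lemma complete_graph_norm_laplacian_eigenvalue:
  assumes comp: "\<forall>u<n. \<forall>v<n. u \<noteq> v \<longrightarrow> E u v"
    and ev: "eigenvalue (norm_laplacian n E) \<mu>" and "\<mu> \<noteq> 0"
  shows "\<mu> = 1 + 1 / (real n - 1)"
proof -
  let ?L = "norm_laplacian n E" and ?s = "sqrt_degree n E"
  obtain x where x: "x \<in> carrier_vec n" "x \<noteq> 0\<^sub>v n" and Lx: "?L *\<^sub>v x = \<mu> \<cdot>\<^sub>v x"
    using ev norm_laplacian_carrier[OF sg] unfolding eigenvalue_def eigenvector_def by auto
  have nb: "nbhd n E i = {..<n} - {i}" if "i < n" for i
    using comp edge_irrefl[OF sg] that by (auto simp: nbhd_def)
  define s where "s = sqrt (real n - 1)"
  have s: "?s i = s" if "i < n" for i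
    using nb[OF that] that n2 by (simp add: degree_def sqrt_degree_def s_def)
  have ss: "s * s = real n - 1" using n2 s_def by simp
  have "(\<Sum>i<n. s * x $ i) = 0"
    using eigenvector_orthogonal_sqrt_degree[OF x(1) Lx \<open>\<mu> \<noteq> 0\<close>] by (simp add: s)
  then have sum0: "(\<Sum>i<n. x $ i) = 0" using n2 s_def by (simp add: sum_distrib_left[symmetric])
  obtain u where u: "u < n" "x $ u \<noteq> 0" using x by (auto simp: vec_eq_iff)
  have "\<mu> * x $ u = x $ u - (\<Sum>k\<in>nbhd n E u. x $ k / (?s u * ?s k))"
    using arg_cong[OF Lx, of "\<lambda>v. v $ u"] norm_laplacian_row_sum[OF sg u(1), of "\<lambda>k. x $ k"]
      index_mult_mat_vec_sum[OF norm_laplacian_carrier[OF sg] x(1) u(1)] x(1) u(1) by simp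
  also have "(\<Sum>k\<in>nbhd n E u. x $ k / (?s u * ?s k)) = (\<Sum>k\<in>{..<n} - {u}. x $ k) / (real n - 1)"
    unfolding nb[OF u(1)] sum_divide_distrib ss[symmetric] by (rule sum.cong[OF refl]) (simp add: s u(1))
  also have "(\<Sum>k\<in>{..<n} - {u}. x $ k) = - x $ u" using sum0 u(1) by (simp add: sum_diff1)
  finally have "\<mu> * x $ u = x $ u * (1 + 1 / (real n - 1))" by (simp add: field_simps)
  then show ?thesis using u(2) by simp
qed

abbreviation (input) quadratic_factor :: "real \<Rightarrow> real \<Rightarrow> real mat" where
  "quadratic_factor \<alpha> \<beta> \<equiv> char_matrix (norm_laplacian n E) \<alpha> * char_matrix (norm_laplacian n E) \<beta>"

lemma quadratic_factor_index:
  assumes "i < n" "j < n"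
  shows "quadratic_factor \<alpha> \<beta> $$ (i,j) = (\<Sum>k<n. norm_laplacian n E $$ (i,k) * norm_laplacian n E $$ (k,j))
    - (\<alpha> + \<beta>) * norm_laplacian n E $$ (i,j) + (if i = j then \<alpha> * \<beta> else 0)"
  by (rule char_matrix_mult_index[OF norm_laplacian_carrier[OF sg] assms])

lemma quadratic_factor_sqrt_degree:
  assumes i: "i < n"
  shows "(\<Sum>j<n. quadratic_factor \<alpha> \<beta> $$ (i,j) * sqrt_degree n E j) = \<alpha> * \<beta> * sqrt_degree n E i"
proof -
  let ?l = "\<lambda>i j. norm_laplacian n E $$ (i,j)" and ?s = "sqrt_degree n E"
  have "(\<Sum>j<n. (\<Sum>k<n. ?l i k * ?l k j) * ?s j) = (\<Sum>j<n. \<Sum>k<n. ?l i k * ?l k j * ?s j)"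
    by (simp add: sum_distrib_right)
  also have "\<dots> = (\<Sum>k<n. \<Sum>j<n. ?l i k * ?l k j * ?s j)"
    by (rule sum.swap)
  also have "\<dots> = (\<Sum>k<n. ?l i k * (\<Sum>j<n. ?l k j * ?s j))"
    by (simp add: sum_distrib_left mult_ac)
  also have "\<dots> = 0" by (simp add: norm_laplacian_sqrt_degree)
  finally have L2w: "(\<Sum>j<n. (\<Sum>k<n. ?l i k * ?l k j) * ?s j) = 0" .
  have "(\<Sum>j<n. quadratic_factor \<alpha> \<beta> $$ (i,j) * ?s j) = (\<Sum>j<n. (\<Sum>k<n. ?l i k * ?l k j) * ?s j
      - (\<alpha> + \<beta>) * (?l i j * ?s j) + (if j = i then \<alpha> * \<beta> * ?s i else 0))"
    using i by (intro sum.cong) (auto simp: quadratic_factor_index algebra_simps)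
  also have "\<dots> = (\<Sum>j<n. (\<Sum>k<n. ?l i k * ?l k j) * ?s j) - (\<alpha> + \<beta>) * (\<Sum>j<n. ?l i j * ?s j)
      + \<alpha> * \<beta> * ?s i"
    using i by (simp add: sum.distrib sum_subtractf sum_distrib_left)
  finally show ?thesis using L2w norm_laplacian_sqrt_degree[OF i] by simp
qed

lemma quadratic_factor_rank_one:
  assumes evs: "\<And>x. eigenvalue (norm_laplacian n E) x \<Longrightarrow> x = \<alpha> \<or> x = \<beta> \<or> x = 0"
  shows "\<exists>\<kappa>. \<forall>i<n. \<forall>j<n.
    quadratic_factor \<alpha> \<beta> $$ (i,j) = \<kappa> * sqrt_degree n E i * sqrt_degree n E j"
proof -
  let ?L = "norm_laplacian n E" and ?M = "quadratic_factor \<alpha> \<beta>" and ?s = "sqrt_degree n E"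
  have L: "?L \<in> carrier_mat n n" by (rule norm_laplacian_carrier[OF sg])
  have M: "?M \<in> carrier_mat n n" using L by (intro mult_carrier_mat) (auto simp: char_matrix_def)
  have "char_matrix ?L 0 * ?M = 0\<^sub>m n n"
    by (rule sym_mat_annihilated_by_eigenvalues[OF L norm_laplacian_sym[OF sg]]) (use evs in auto)
  moreover have "char_matrix ?L 0 = ?L" using L by (auto simp: char_matrix_def)
  ultimately have LM: "(\<Sum>k<n. ?L $$ (i,k) * ?M $$ (k,j)) = 0" if "i < n" "j < n" for i j
    using index_mult_mat_sum[OF L M that] that by simp
  have "\<forall>j\<in>{..<n}. \<exists>c. \<forall>i<n. ?M $$ (i,j) = c * ?s i"
  proof
    fix j assume "j \<in> {..<n}"
    then show "\<exists>c. \<forall>i<n. ?M $$ (i,j) = c * ?s i"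
      using norm_laplacian_kernel[of "\<lambda>k. ?M $$ (k,j)"] LM by simp
  qed
  from bchoice[OF this] obtain c where c: "\<forall>j\<in>{..<n}. \<forall>i<n. ?M $$ (i,j) = c j * ?s i" ..
  have M_sym: "?M $$ (i,j) = ?M $$ (j,i)" if i: "i < n" and j: "j < n" for i j
  proof -
    have "(\<Sum>k<n. ?L $$ (i,k) * ?L $$ (k,j)) = (\<Sum>k<n. ?L $$ (j,k) * ?L $$ (k,i))"
    proof (rule sum.cong)
      fix k assume "k \<in> {..<n}"
      then show "?L $$ (i,k) * ?L $$ (k,j) = ?L $$ (j,k) * ?L $$ (k,i)"
        using norm_laplacian_sym[OF sg i, of k] norm_laplacian_sym[OF sg _ j, of k] by simp
    qed simp
    then show ?thesis using i j norm_laplacian_sym[OF sg i j] by (simp add: quadratic_factor_index)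
  qed
  have n0: "0 < n" using n2 by simp
  \<comment> \<open>symmetry of \<open>M\<close> makes the column coefficients \<open>c j\<close> proportional to \<open>?s j\<close>\<close>
  have cj: "c j = c 0 / ?s 0 * ?s j" if j: "j < n" for j
  proof -
    have "c j * ?s 0 = ?M $$ (0,j)" using c j n0 by simp
    also have "\<dots> = ?M $$ (j,0)" by (rule M_sym[OF n0 j])
    also have "\<dots> = c 0 * ?s j" using c j n0 by simp
    finally show ?thesis using sqrt_degree_pos[OF n0] by (simp add: field_simps)
  qed
  have "?M $$ (i,j) = c 0 / ?s 0 * ?s i * ?s j" if "i < n" "j < n" for i j
    using that c cj[of j] by simp
  then show ?thesis by blast
qed

context
  fixes \<alpha> \<beta> \<kappa> :: real
  assumes rank_one: "\<forall>i<n. \<forall>j<n. quadratic_factor \<alpha> \<beta> $$ (i,j) = \<kappa> * sqrt_degree n E i * sqrt_degree n E j"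
begin

lemma rank_one_coefficient: "\<kappa> * (2 * real (num_edges n E)) = \<alpha> * \<beta>"
proof -
  let ?s = "sqrt_degree n E"
  have n0: "0 < n" using n2 by simp
  have "\<alpha> * \<beta> * ?s 0 = (\<Sum>j<n. \<kappa> * ?s 0 * real (degree n E j))"
    using quadratic_factor_sqrt_degree[OF n0, symmetric]
    by (simp add: rank_one n0 mult.assoc sqrt_degree_square)
  also have "\<dots> = \<kappa> * (2 * real (num_edges n E)) * ?s 0"
    by (simp add: sum_distrib_left[symmetric] handshake[OF sg] mult_ac)
  finally show ?thesis using sqrt_degree_pos[OF n0] by simp
qed

lemma two_walk_weight_nonadjacent:
  assumes u: "u < n" and v: "v < n" and "u \<noteq> v" "\<not> E u v"
  shows "two_walk_weight n E u v = \<kappa> * real (degree n E u) * real (degree n E v)"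
proof -
  let ?s = "sqrt_degree n E"
  have "two_walk_weight n E u v / (?s u * ?s v) = \<kappa> * ?s u * ?s v"
    using rank_one[rule_format, OF u v] quadratic_factor_index[OF u v] norm_laplacian_square_index[OF sg u v]
      norm_laplacian_index[OF sg u v] assms by simp
  then have "two_walk_weight n E u v = \<kappa> * (?s u * ?s u) * (?s v * ?s v)"
    using sqrt_degree_pos[OF u] sqrt_degree_pos[OF v] by (simp add: field_simps)
  then show ?thesis by (simp only: sqrt_degree_square)
qed

lemma two_walk_weight_self:
  assumes u: "u < n"
  shows "two_walk_weight n E u u = real (degree n E u) * (\<kappa> * real (degree n E u) - (1 - \<alpha>) * (1 - \<beta>))"
proof -
  let ?d = "real (degree n E u)"
  have "1 + two_walk_weight n E u u / ?d - (\<alpha> + \<beta>) + \<alpha> * \<beta> = \<kappa> * ?d"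
    using rank_one[rule_format, OF u u] quadratic_factor_index[OF u u] norm_laplacian_square_index[OF sg u u]
      norm_laplacian_index[OF sg u u] edge_irrefl[OF sg] sqrt_degree_square[of n E u]
    by (simp add: mult.assoc)
  then show ?thesis using degree_pos[OF u] by (simp add: field_simps)
qed

lemma degree_difference_bound:
  assumes "\<kappa> > 0" "u < n" "v < n" "u \<noteq> v" "\<not> E u v"
  shows "(1 - \<alpha>) * (1 - \<beta>) \<le> \<kappa> * (real (degree n E u) - real (degree n E v))"
proof -
  let ?du = "real (degree n E u)" and ?dv = "real (degree n E v)"
  have "?du * (\<kappa> * ?dv) \<le> ?du * (\<kappa> * ?du - (1 - \<alpha>) * (1 - \<beta>))"
    using two_walk_weight_le_self[OF sg, of u v] two_walk_weight_nonadjacent two_walk_weight_self assms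
    by (simp add: mult_ac)
  then have "\<kappa> * ?dv \<le> \<kappa> * ?du - (1 - \<alpha>) * (1 - \<beta>)"
    using degree_pos[OF \<open>u < n\<close>] by (simp add: mult_le_cancel_left_pos)
  then show ?thesis by (simp add: algebra_simps)
qed

lemma degree_difference_bounds:
  assumes "\<kappa> > 0" "u < n" "v < n" "u \<noteq> v" "\<not> E u v"
  shows "(1 - \<alpha>) * (1 - \<beta>) / \<kappa> \<le> real (degree n E u) - real (degree n E v) \<and>
    real (degree n E u) - real (degree n E v) \<le> - ((1 - \<alpha>) * (1 - \<beta>) / \<kappa>)"
proof -
  have "\<not> E v u" using assms edge_sym[OF sg, of v u] by blast
  then have "(1 - \<alpha>) * (1 - \<beta>) / \<kappa> \<le> real (degree n E u) - real (degree n E v)"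
      "(1 - \<alpha>) * (1 - \<beta>) / \<kappa> \<le> real (degree n E v) - real (degree n E u)"
    using degree_difference_bound[of u v] degree_difference_bound[of v u] assms
    by (simp_all add: pos_divide_le_eq mult.commute)
  then show ?thesis by linarith
qed

lemma rank_one_coefficient_pos:
  assumes "\<alpha> * \<beta> > 0"
  shows "\<kappa> > 0"
proof -
  have "0 < \<kappa> * (2 * real (num_edges n E))" using rank_one_coefficient assms by simp
  then show ?thesis by (simp add: zero_less_mult_iff)
qed

lemma nbhd_eq_of_nonadjacent:
  assumes "\<beta> = 1" "\<kappa> > 0" "u < n" "v < n" "u \<noteq> v" "\<not> E u v"
  shows "nbhd n E u = nbhd n E v"
proof -
  have vu: "\<not> E v u" using assms edge_sym[OF sg] by blast
  have "degree n E u = degree n E v"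
    using degree_difference_bound[of u v] degree_difference_bound[of v u] assms vu
    by (simp add: zero_le_mult_iff)
  then have "two_walk_weight n E u v = two_walk_weight n E u u"
      "two_walk_weight n E v u = two_walk_weight n E v v"
    using two_walk_weight_nonadjacent two_walk_weight_self assms vu by simp_all
  then show ?thesis using nbhd_subset_of_two_walk_weight_eq[OF sg] by blast
qed

end

lemma exists_nonadjacent_pair:
  assumes "eigenvalue (norm_laplacian n E) \<alpha>" "eigenvalue (norm_laplacian n E) \<beta>"
    and "\<alpha> \<noteq> \<beta>" "\<alpha> \<noteq> 0" "\<beta> \<noteq> 0"
  shows "\<exists>u<n. \<exists>v<n. u \<noteq> v \<and> \<not> E u v"
  using complete_graph_norm_laplacian_eigenvalue assms by metis

end

theorem lemma2p4:
  fixes n :: nat and E :: "nat \<Rightarrow> nat \<Rightarrow> bool" and \<alpha> \<beta> :: real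
  assumes "simple_graph n E"
    and "connected_graph n E"
    and "{x. eigenvalue (norm_laplacian n E) x} = {\<alpha>, \<beta>, 0}"
    and "eig_mult (norm_laplacian n E) 0 = 1"
    and "2 \<ge> \<alpha>" and "\<alpha> > \<beta>" and "\<beta> > 0"
  shows "\<beta> \<le> 1 \<and>
    ((\<beta> = 1 \<and> (\<forall>u<n. \<forall>v<n. u \<noteq> v \<and> \<not> E u v \<longrightarrow> nbhd n E u = nbhd n E v)) \<or>
     (\<beta> < 1 \<and> (\<forall>u<n. \<forall>v<n. u \<noteq> v \<and> \<not> E u v \<longrightarrow>
        - (2 * real (num_edges n E) * (\<alpha> - 1) * (\<beta> - 1) / (\<alpha> * \<beta>))
          \<ge> real (degree n E u) - real (degree n E v) \<and>
        real (degree n E u) - real (degree n E v)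
          \<ge> 2 * real (num_edges n E) * (\<alpha> - 1) * (\<beta> - 1) / (\<alpha> * \<beta>))))"
proof -
  note sg = assms(1) and con = assms(2)
  let ?L = "norm_laplacian n E" and ?m = "real (num_edges n E)"
  have evs: "eigenvalue ?L x \<longleftrightarrow> x = \<alpha> \<or> x = \<beta> \<or> x = 0" for x using assms(3) by blast
  have n2: "n \<ge> 2" using two_le_card_of_singular_norm_laplacian[OF sg con] evs by blast
  have "\<exists>\<kappa>. \<forall>i<n. \<forall>j<n.
      quadratic_factor n E \<alpha> \<beta> $$ (i,j) = \<kappa> * sqrt_degree n E i * sqrt_degree n E j"
    by (rule quadratic_factor_rank_one[OF sg con n2]) (simp add: evs)
  then obtain \<kappa> where \<kappa>: "\<forall>i<n. \<forall>j<n.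
      quadratic_factor n E \<alpha> \<beta> $$ (i,j) = \<kappa> * sqrt_degree n E i * sqrt_degree n E j"
    by blast
  have \<kappa>_pos: "\<kappa> > 0" using assms(6,7) by (intro rank_one_coefficient_pos[OF sg con n2 \<kappa>] mult_pos_pos) simp_all
  have X: "2 * ?m * (\<alpha> - 1) * (\<beta> - 1) / (\<alpha> * \<beta>) = (1 - \<alpha>) * (1 - \<beta>) / \<kappa>"
    using rank_one_coefficient[OF sg con n2 \<kappa>] \<kappa>_pos assms(6,7) by (simp add: field_simps)
  note bounds = degree_difference_bounds[OF sg con n2 \<kappa> \<kappa>_pos]
  have "\<exists>u<n. \<exists>v<n. u \<noteq> v \<and> \<not> E u v"
    using assms(6,7) by (intro exists_nonadjacent_pair[OF sg con n2, of \<alpha> \<beta>]) (simp_all add: evs)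
  then obtain u v where "u < n" "v < n" "u \<noteq> v" "\<not> E u v" by blast
  from bounds[OF this] have "(1 - \<alpha>) * (1 - \<beta>) / \<kappa> \<le> 0" by linarith
  then have "(\<alpha> - 1) * (\<beta> - 1) \<le> 0" using \<kappa>_pos by (simp add: divide_le_0_iff algebra_simps)
  then have \<beta>1: "\<beta> \<le> 1" using assms(6) by (metis diff_gt_0_iff_gt not_le mult_pos_pos order.strict_trans)
  show ?thesis
  proof (cases "\<beta> = 1")
    case True
    then show ?thesis using nbhd_eq_of_nonadjacent[OF sg con n2 \<kappa> _ \<kappa>_pos] by blast
  next
    case False
    then show ?thesis using \<beta>1 bounds unfolding X by auto
  qed
qed

end
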